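(* Consider a finite MDP with state space $\mathcal S$, action space $\mathcal A$, transition kernel $P$, deterministic reward function $r(s,a,s')$, discount $\gamma\in[0,1)$ and optimal Q-function $Q^*$. Let $\beta>0$. Let $(s_k,a_k,s_k')_{k\ge0}$ be i.i.d. triples where $s_k\sim p$ for a fixed state distribution $p$, $a_k\sim b(\cdot\mid s_k)$ for a fixed behavior policy $b$, $s_k'\sim P(\cdot\mid s_k,a_k)$, and assume $d(s,a):=p(s)b(a\mid s)>0$ for all $(s,a)$. Let $Q^A_0,Q^B_0$ be arbitrary and define (SGT2-QL) $$Q^A_{k+1}(s_k,a_k)=Q^A_k(s_k,a_k)+\alpha_k\Big(r(s_k,a_k,s_k')+\gamma\max_{a}Q^B_k(s_k',a)-Q^A_k(s_k,a_k)+\beta\big(Q^B_k(s_k,a_k)-Q^A_k(s_k,a_k)\big)\Big),$$ $$Q^B_{k+1}(s_k,a_k)=Q^B_k(s_k,a_k)+\alpha_k\Big(r(s_k,a_k,s_k')+\gamma\max_{a}Q^A_k(s_k',a)-Q^B_k(s_k,a_k)+\beta\big(Q^A_k(s_k,a_k)-Q^B_k(s_k,a_k)\big)\Big),$$ with all other entries unchanged. If $0\le\alpha_k\le1$, $\sum_k\alpha_k=\infty$ and $\sum_k\alpha_k^2<\infty$, then $Q^A_k\to Q^*$ and $Q^B_k\to Q^*$ with probability one.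
   Context: $Q^*$ is the unique solution of $Q^*(s,a)=\sum_{s'}P(s'\mid s,a)\big(r(s,a,s')+\gamma\max_{a'}Q^*(s',a')\big)$. There are no terminal states. *)

theory Defs
  imports "HOL-Probability.Probability"
begin

type_synonym ('s,'a) qfun = "'s \<Rightarrow> 'a \<Rightarrow> real"

definition Qstar :: "('s::finite \<Rightarrow> 'a::finite \<Rightarrow> 's pmf) \<Rightarrow> ('s \<Rightarrow> 'a \<Rightarrow> 's \<Rightarrow> real) \<Rightarrow> real \<Rightarrow> ('s,'a) qfun" where
  "Qstar P r \<gamma> = (THE Q. \<forall>s a. Q s a =
      (\<Sum>s'\<in>UNIV. pmf (P s a) s' * (r s a s' + \<gamma> * Max (range (Q s')))))"

definition sample_pmf :: "'s pmf \<Rightarrow> ('s \<Rightarrow> 'a pmf) \<Rightarrow> ('s \<Rightarrow> 'a \<Rightarrow> 's pmf) \<Rightarrow> ('s \<times> 'a \<times> 's) pmf" where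
  "sample_pmf p b P = do { s \<leftarrow> p; a \<leftarrow> b s; s' \<leftarrow> P s a; return_pmf (s, a, s') }"

fun sgt2 :: "('s \<Rightarrow> 'a \<Rightarrow> 's \<Rightarrow> real) \<Rightarrow> real \<Rightarrow> real \<Rightarrow> (nat \<Rightarrow> real) \<Rightarrow>
    (nat \<Rightarrow> 's \<times> 'a \<times> 's) \<Rightarrow> ('s::finite,'a::finite) qfun \<Rightarrow> ('s,'a) qfun \<Rightarrow> nat
    \<Rightarrow> ('s,'a) qfun \<times> ('s,'a) qfun" where
  "sgt2 r \<gamma> \<beta> \<alpha> xs QA0 QB0 0 = (QA0, QB0)"
| "sgt2 r \<gamma> \<beta> \<alpha> xs QA0 QB0 (Suc k) =
    (let (QA, QB) = sgt2 r \<gamma> \<beta> \<alpha> xs QA0 QB0 k;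
         (s, a, s') = xs k;
         vA = QA s a + \<alpha> k * (r s a s' + \<gamma> * Max (range (QB s')) - QA s a
                                 + \<beta> * (QB s a - QA s a));
         vB = QB s a + \<alpha> k * (r s a s' + \<gamma> * Max (range (QA s')) - QB s a
                                 + \<beta> * (QA s a - QB s a))
     in (QA(s := (QA s)(a := vA)), QB(s := (QB s)(a := vB))))"

end

theory Submission
  imports Defs
begin

(* Averaged over the sampling distribution, an update moves Q(s,a) by alpha_k d(s,a) towards
   r + gamma max Q' + beta Q', where Q' is the other iterate. Q* is the fixed point of this
   map, which contracts distances to Q* by the factor rho = (gamma + beta) / (1 + beta) < 1.
   What remains is noise of the form alpha_k xi_k F_k with xi_k a centred visit indicator
   and F_k bounded and varying by O(alpha_k). Kolmogorov's maximal inequality makes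
   sum alpha_k xi_k converge almost surely (this is where independence and
   sum alpha_k^2 < infinity enter), and summation by parts then shows that the accumulated
   noise vanishes. Along such a path the iterates stay bounded, and any eventual bound D on
   the remaining error improves to rho D + delta because sum alpha_k diverges; iterating this
   gives convergence to Q*. *)

section \<open>Kolmogorov's inequality and random series\<close>

lemma abs_le_imp_power2_le: "\<bar>x::real\<bar> \<le> y \<Longrightarrow> x\<^sup>2 \<le> y\<^sup>2"
  by (metis abs_ge_zero power2_abs power_mono)

lemma borel_measurable_PiM_count_space_finite:
  fixes g :: "(nat \<Rightarrow> 'x::finite) \<Rightarrow> real"
  assumes "finite I"
  shows "g \<in> borel_measurable (PiM I (\<lambda>_. count_space UNIV))"
proof (rule measurable_discrete_difference[where f="\<lambda>_. 0" and X="space (PiM I (\<lambda>_. count_space UNIV))"])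
  show "countable (space (PiM I (\<lambda>_. count_space (UNIV::'x set))))"
    using assms by (auto simp: space_PiM intro!: countable_finite finite_PiE)
  fix x assume x: "x \<in> space (PiM I (\<lambda>_. count_space (UNIV::'x set)))"
  have "{x} = PiE I (\<lambda>l. {x l})"
    using x by (auto simp: space_PiM PiE_iff extensional_def fun_eq_iff) metis
  also have "\<dots> \<in> sets (PiM I (\<lambda>_. count_space UNIV))"
    using assms by (intro sets_PiM_I_countable) (auto intro: countable_finite)
  finally show "{x} \<in> sets (PiM I (\<lambda>_. count_space (UNIV::'x set)))" .
qed auto

lemma (in prob_space) integral_past_mult_indep_var:
  fixes X :: "nat \<Rightarrow> 'a \<Rightarrow> 'x::finite" and g :: "(nat \<Rightarrow> 'x) \<Rightarrow> real" and h :: "'x \<Rightarrow> real"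
  assumes meas: "\<And>k. X k \<in> measurable M (count_space UNIV)"
    and indep: "indep_vars (\<lambda>_. count_space UNIV) X UNIV"
    and g_bound: "\<And>f. \<bar>g f\<bar> \<le> C"
  shows "(\<integral>\<omega>. g (\<lambda>l\<in>{..<i}. X l \<omega>) * h (X i \<omega>) \<partial>M)
       = (\<integral>\<omega>. g (\<lambda>l\<in>{..<i}. X l \<omega>) \<partial>M) * (\<integral>\<omega>. h (X i \<omega>) \<partial>M)"
proof -
  have "indep_var (PiM {..<i} (\<lambda>_. count_space UNIV)) (\<lambda>\<omega>. \<lambda>l\<in>{..<i}. X l \<omega>)
                  (PiM {i} (\<lambda>_. count_space UNIV)) (\<lambda>\<omega>. \<lambda>l\<in>{i}. X l \<omega>)"
    by (rule indep_var_restrict[OF indep]) auto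
  then have indep_gh: "indep_var borel (g \<circ> (\<lambda>\<omega>. \<lambda>l\<in>{..<i}. X l \<omega>))
                                 borel ((\<lambda>f. h (f i)) \<circ> (\<lambda>\<omega>. \<lambda>l\<in>{i}. X l \<omega>))"
    by (rule indep_var_compose[OF _ borel_measurable_PiM_count_space_finite
                                    borel_measurable_PiM_count_space_finite]) auto
  have "(\<lambda>\<omega>. \<lambda>l\<in>{..<i}. X l \<omega>) \<in> measurable M (PiM {..<i} (\<lambda>_. count_space UNIV))"
    by (intro measurable_restrict meas)
  then have "integrable M (\<lambda>\<omega>. g (\<lambda>l\<in>{..<i}. X l \<omega>))"
    by (intro integrable_const_bound[where B=C])
       (auto simp: g_bound intro!: measurable_compose[OF _ borel_measurable_PiM_count_space_finite])
  moreover have "integrable M (\<lambda>\<omega>. h (X i \<omega>))"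
    by (rule integrable_const_bound[where B="Max (range (\<lambda>x. \<bar>h x\<bar>))"])
       (auto intro!: measurable_compose[OF meas])
  ultimately show ?thesis
    using indep_var_lebesgue_integral[OF indep_gh] by (simp add: comp_def)
qed

locale indep_bounded_centered = prob_space +
  fixes X :: "nat \<Rightarrow> 'a \<Rightarrow> 'x::finite" and \<phi> :: "nat \<Rightarrow> 'x \<Rightarrow> real" and c :: "nat \<Rightarrow> real"
  assumes meas: "\<And>k. X k \<in> measurable M (count_space UNIV)"
    and indep: "indep_vars (\<lambda>_. count_space UNIV) X UNIV"
    and bound: "\<And>k x. \<bar>\<phi> k x\<bar> \<le> c k"
    and centered: "\<And>k. (\<integral>\<omega>. \<phi> k (X k \<omega>) \<partial>M) = 0"
begin

definition Y :: "nat \<Rightarrow> 'a \<Rightarrow> real" where "Y k \<omega> = \<phi> k (X k \<omega>)"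

definition S :: "nat \<Rightarrow> nat \<Rightarrow> 'a \<Rightarrow> real" where "S N k \<omega> = (\<Sum>i\<in>{N..<k}. Y i \<omega>)"

text \<open>\<open>S N k\<close> as a function of the sample path, so that it can be composed with restrictions
  of the path to the past.\<close>
definition S_path :: "nat \<Rightarrow> nat \<Rightarrow> (nat \<Rightarrow> 'x) \<Rightarrow> real" where
  "S_path N k f = (\<Sum>i\<in>{N..<k}. \<phi> i (f i))"

lemma c_nonneg: "0 \<le> c k"
  using bound[of k undefined] by linarith

lemma Y_measurable[measurable]: "Y k \<in> borel_measurable M"
  unfolding Y_def by (rule measurable_compose[OF meas]) auto

lemma S_measurable[measurable]: "S N k \<in> borel_measurable M"
  unfolding S_def by measurable

lemma past_measurable[measurable]: "(\<lambda>\<omega>. g (\<lambda>l\<in>{..<i}. X l \<omega>) :: real) \<in> borel_measurable M"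
  by (rule measurable_compose[OF measurable_restrict borel_measurable_PiM_count_space_finite])
     (auto intro: meas)

lemma integrable_abs_bounded:
  "f \<in> borel_measurable M \<Longrightarrow> (\<And>\<omega>. \<bar>f \<omega>\<bar> \<le> B) \<Longrightarrow> integrable M (f :: 'a \<Rightarrow> real)"
  by (rule integrable_const_bound[where B=B]) auto

lemma S_path_restrict: "k \<le> m \<Longrightarrow> S_path N k (\<lambda>l\<in>{..<m}. X l \<omega>) = S N k \<omega>"
  unfolding S_path_def S_def Y_def by (intro sum.cong) auto

lemma abs_S_path_le: "\<bar>S_path N k f\<bar> \<le> (\<Sum>i<k. c i)"
proof -
  have "\<bar>S_path N k f\<bar> \<le> (\<Sum>i\<in>{N..<k}. \<bar>\<phi> i (f i)\<bar>)" unfolding S_path_def by (rule sum_abs)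
  also have "\<dots> \<le> (\<Sum>i\<in>{N..<k}. c i)" by (intro sum_mono bound)
  also have "\<dots> \<le> (\<Sum>i<k. c i)" by (intro sum_mono2) (auto simp: c_nonneg)
  finally show ?thesis .
qed

lemma abs_S_le: "\<bar>S N k \<omega>\<bar> \<le> (\<Sum>i<k. c i)"
  using abs_S_path_le[of N k "\<lambda>l\<in>{..<k}. X l \<omega>"] S_path_restrict[of k k N \<omega>] by simp

lemma abs_Y_le: "\<bar>Y k \<omega>\<bar> \<le> c k"
  unfolding Y_def by (rule bound)

lemma integral_past_mult_Y:
  assumes "\<And>f. \<bar>g f\<bar> \<le> C"
  shows "(\<integral>\<omega>. g (\<lambda>l\<in>{..<i}. X l \<omega>) * Y i \<omega> \<partial>M) = 0"
  using integral_past_mult_indep_var[OF meas indep assms, where i=i and h="\<phi> i"] centered[of i]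
  by (simp add: Y_def)

lemma integral_past_mult_S_Suc_sq:
  fixes g :: "(nat \<Rightarrow> 'x) \<Rightarrow> real"
  assumes g_bound: "\<And>f. \<bar>g f\<bar> \<le> C" and "k \<le> m" "N \<le> m"
  shows "(\<integral>\<omega>. g (\<lambda>l\<in>{..<k}. X l \<omega>) * (S N (Suc m) \<omega>)\<^sup>2 \<partial>M)
       = (\<integral>\<omega>. g (\<lambda>l\<in>{..<k}. X l \<omega>) * (S N m \<omega>)\<^sup>2 \<partial>M)
         + (\<integral>\<omega>. g (\<lambda>l\<in>{..<k}. X l \<omega>) * (Y m \<omega>)\<^sup>2 \<partial>M)"
proof -
  let ?G = "\<lambda>\<omega>. g (\<lambda>l\<in>{..<k}. X l \<omega>)"
  have C: "0 \<le> C" using g_bound[of undefined] by linarith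
  have "?G \<omega> * (S N (Suc m) \<omega>)\<^sup>2
      = ?G \<omega> * (S N m \<omega>)\<^sup>2 + 2 * (?G \<omega> * S N m \<omega> * Y m \<omega>) + ?G \<omega> * (Y m \<omega>)\<^sup>2" for \<omega>
    using \<open>N \<le> m\<close> by (simp add: S_def power2_eq_square algebra_simps)
  moreover have "integrable M (\<lambda>\<omega>. ?G \<omega> * (S N m \<omega>)\<^sup>2)"
    by (rule integrable_abs_bounded[where B="C * (\<Sum>i<m. c i)\<^sup>2"], measurable)
       (auto simp: abs_mult C intro!: mult_mono g_bound abs_le_imp_power2_le abs_S_le)
  moreover have "integrable M (\<lambda>\<omega>. ?G \<omega> * S N m \<omega> * Y m \<omega>)"
    by (rule integrable_abs_bounded[where B="C * (\<Sum>i<m. c i) * c m"], measurable)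
       (auto simp: abs_mult C c_nonneg sum_nonneg intro!: mult_mono g_bound abs_S_le abs_Y_le)
  moreover have "integrable M (\<lambda>\<omega>. ?G \<omega> * (Y m \<omega>)\<^sup>2)"
    by (rule integrable_abs_bounded[where B="C * (c m)\<^sup>2"], measurable)
       (auto simp: abs_mult C intro!: mult_mono g_bound abs_le_imp_power2_le abs_Y_le)
  moreover have "(\<integral>\<omega>. ?G \<omega> * S N m \<omega> * Y m \<omega> \<partial>M) = 0"
  proof -
    \<comment> \<open>the cross term vanishes: \<open>?G \<cdot> S N m\<close> depends only on the path before time \<open>m\<close>\<close>
    let ?g = "\<lambda>f. g (restrict f {..<k}) * S_path N m f"
    have "(\<integral>\<omega>. ?g (\<lambda>l\<in>{..<m}. X l \<omega>) * Y m \<omega> \<partial>M) = 0"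
      by (rule integral_past_mult_Y[where C="C * (\<Sum>i<m. c i)"])
         (auto simp: abs_mult C c_nonneg sum_nonneg intro!: mult_mono g_bound abs_S_path_le)
    moreover have "?g (\<lambda>l\<in>{..<m}. X l \<omega>) = ?G \<omega> * S N m \<omega>" for \<omega>
      using \<open>k \<le> m\<close> by (auto simp: S_path_restrict intro!: arg_cong[where f=g])
    ultimately show ?thesis by simp
  qed
  ultimately show ?thesis by (simp add: integral_add)
qed

lemma integral_past_mult_S_sq_mono:
  fixes g :: "(nat \<Rightarrow> 'x) \<Rightarrow> real"
  assumes "\<And>f. \<bar>g f\<bar> \<le> C" "\<And>f. 0 \<le> g f" "N \<le> k" "k \<le> m"
  shows "(\<integral>\<omega>. g (\<lambda>l\<in>{..<k}. X l \<omega>) * (S N k \<omega>)\<^sup>2 \<partial>M)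
       \<le> (\<integral>\<omega>. g (\<lambda>l\<in>{..<k}. X l \<omega>) * (S N m \<omega>)\<^sup>2 \<partial>M)"
  using \<open>k \<le> m\<close>
proof (induction m rule: dec_induct)
  case (step m)
  have "0 \<le> (\<integral>\<omega>. g (\<lambda>l\<in>{..<k}. X l \<omega>) * (Y m \<omega>)\<^sup>2 \<partial>M)"
    using assms(2) by (intro integral_nonneg_AE AE_I2 mult_nonneg_nonneg) auto
  then show ?case
    using step.IH integral_past_mult_S_Suc_sq[where g=g, OF assms(1) step.hyps(1) order_trans[OF assms(3) step.hyps(1)]]
      assms(3) step.hyps(1) by linarith
qed simp

lemma integral_S_sq_le:
  assumes "N \<le> n"
  shows "(\<integral>\<omega>. (S N n \<omega>)\<^sup>2 \<partial>M) \<le> (\<Sum>i\<in>{N..<n}. (c i)\<^sup>2)"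
  using assms
proof (induction n rule: dec_induct)
  case (step m)
  have "(\<integral>\<omega>. (S N (Suc m) \<omega>)\<^sup>2 \<partial>M) = (\<integral>\<omega>. (S N m \<omega>)\<^sup>2 \<partial>M) + (\<integral>\<omega>. (Y m \<omega>)\<^sup>2 \<partial>M)"
    using integral_past_mult_S_Suc_sq[of "\<lambda>_. 1" 1 0 m N] step.hyps by simp
  moreover have "(\<integral>\<omega>. (Y m \<omega>)\<^sup>2 \<partial>M) \<le> (\<integral>\<omega>. (c m)\<^sup>2 \<partial>M)"
    by (intro integral_mono integrable_abs_bounded[where B="(c m)\<^sup>2"])
       (auto intro: abs_le_imp_power2_le abs_Y_le)
  ultimately show ?case using step by (simp add: prob_space)
qed (simp add: S_def)

end

lemma sum_first_passage_indicator:
  fixes t :: "nat \<Rightarrow> real"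
  assumes "N \<le> n"
  shows "(\<Sum>k\<in>{N..n}. if \<epsilon> \<le> \<bar>t k\<bar> \<and> (\<forall>l\<in>{N..<k}. \<bar>t l\<bar> < \<epsilon>) then 1 else 0)
       = (if \<exists>k\<in>{N..n}. \<epsilon> \<le> \<bar>t k\<bar> then 1 else (0::real))"
  using assms
proof (induction n rule: dec_induct)
  case (step n)
  have "{N..Suc n} = insert (Suc n) {N..n}" using step.hyps by auto
  moreover have "(\<forall>l\<in>{N..<Suc n}. \<bar>t l\<bar> < \<epsilon>) \<longleftrightarrow> \<not> (\<exists>k\<in>{N..n}. \<epsilon> \<le> \<bar>t k\<bar>)"
    by (auto simp: not_le less_Suc_eq_le)
  ultimately show ?case using step.IH by auto
qed auto

context indep_bounded_centered
begin

definition first_passage :: "real \<Rightarrow> nat \<Rightarrow> nat \<Rightarrow> (nat \<Rightarrow> 'x) \<Rightarrow> real" where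
  "first_passage \<epsilon> N k f =
     (if \<epsilon> \<le> \<bar>S_path N k f\<bar> \<and> (\<forall>l\<in>{N..<k}. \<bar>S_path N l f\<bar> < \<epsilon>) then 1 else 0)"

lemma first_passage_restrict:
  "first_passage \<epsilon> N k (\<lambda>l\<in>{..<k}. X l \<omega>)
     = (if \<epsilon> \<le> \<bar>S N k \<omega>\<bar> \<and> (\<forall>l\<in>{N..<k}. \<bar>S N l \<omega>\<bar> < \<epsilon>) then 1 else 0)"
  unfolding first_passage_def by (simp add: S_path_restrict)

lemma integrable_first_passage:
  "integrable M (\<lambda>\<omega>. first_passage \<epsilon> N k (\<lambda>l\<in>{..<k}. X l \<omega>))"
  by (rule integrable_abs_bounded[where B=1], measurable) (auto simp: first_passage_def)

lemma integrable_first_passage_mult_S_sq: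
  "integrable M (\<lambda>\<omega>. first_passage \<epsilon> N k (\<lambda>l\<in>{..<k}. X l \<omega>) * (S N n \<omega>)\<^sup>2)"
  by (rule integrable_abs_bounded[where B="(\<Sum>i<n. c i)\<^sup>2"], measurable)
     (auto simp: first_passage_def intro: abs_le_imp_power2_le abs_S_le)

lemma integral_first_passage_le:
  assumes "N \<le> k" "k \<le> n" "0 \<le> \<epsilon>"
  shows "\<epsilon>\<^sup>2 * (\<integral>\<omega>. first_passage \<epsilon> N k (\<lambda>l\<in>{..<k}. X l \<omega>) \<partial>M)
       \<le> (\<integral>\<omega>. first_passage \<epsilon> N k (\<lambda>l\<in>{..<k}. X l \<omega>) * (S N n \<omega>)\<^sup>2 \<partial>M)"
proof -
  let ?g = "\<lambda>\<omega>. first_passage \<epsilon> N k (\<lambda>l\<in>{..<k}. X l \<omega>)"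
  have "\<epsilon>\<^sup>2 * (\<integral>\<omega>. ?g \<omega> \<partial>M) = (\<integral>\<omega>. \<epsilon>\<^sup>2 * ?g \<omega> \<partial>M)" by simp
  also have "\<dots> \<le> (\<integral>\<omega>. ?g \<omega> * (S N k \<omega>)\<^sup>2 \<partial>M)"
    by (intro integral_mono integrable_first_passage_mult_S_sq integrable_mult_right
              integrable_abs_bounded[where B=1])
       (use \<open>0 \<le> \<epsilon>\<close> in \<open>auto simp: first_passage_restrict abs_le_square_iff[symmetric]\<close>)
  also have "\<dots> \<le> (\<integral>\<omega>. ?g \<omega> * (S N n \<omega>)\<^sup>2 \<partial>M)"
    using assms(1,2) by (intro integral_past_mult_S_sq_mono[where C=1]) (auto simp: first_passage_def)
  finally show ?thesis .
qed

theorem kolmogorov_maximal_inequality: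
  assumes "N \<le> n" "0 < \<epsilon>"
  shows "prob {\<omega>\<in>space M. \<exists>k\<in>{N..n}. \<epsilon> \<le> \<bar>S N k \<omega>\<bar>} \<le> (\<Sum>i\<in>{N..<n}. (c i)\<^sup>2) / \<epsilon>\<^sup>2"
proof -
  define E where "E = {\<omega>\<in>space M. \<exists>k\<in>{N..n}. \<epsilon> \<le> \<bar>S N k \<omega>\<bar>}"
  let ?g = "\<lambda>k \<omega>. first_passage \<epsilon> N k (\<lambda>l\<in>{..<k}. X l \<omega>)"
  have E[measurable]: "E \<in> sets M" unfolding E_def by measurable
  have indicator_E: "indicator E \<omega> = (\<Sum>k\<in>{N..n}. ?g k \<omega>)" if "\<omega> \<in> space M" for \<omega>
    using that unfolding first_passage_restrict sum_first_passage_indicator[OF \<open>N \<le> n\<close>]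
    by (auto simp: E_def)
  have "prob E = (\<integral>\<omega>. indicator E \<omega> \<partial>M)" by simp
  also have "\<dots> = (\<integral>\<omega>. (\<Sum>k\<in>{N..n}. ?g k \<omega>) \<partial>M)"
    by (rule Bochner_Integration.integral_cong) (simp_all add: indicator_E)
  finally have "\<epsilon>\<^sup>2 * prob E = \<epsilon>\<^sup>2 * (\<Sum>k\<in>{N..n}. (\<integral>\<omega>. ?g k \<omega> \<partial>M))"
    by (simp add: Bochner_Integration.integral_sum integrable_first_passage)
  also have "\<dots> \<le> (\<Sum>k\<in>{N..n}. (\<integral>\<omega>. ?g k \<omega> * (S N n \<omega>)\<^sup>2 \<partial>M))"
    unfolding sum_distrib_left using \<open>0 < \<epsilon>\<close> by (intro sum_mono integral_first_passage_le) auto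
  also have "\<dots> = (\<integral>\<omega>. indicator E \<omega> * (S N n \<omega>)\<^sup>2 \<partial>M)"
    by (subst Bochner_Integration.integral_sum[symmetric])
       (auto intro!: integrable_first_passage_mult_S_sq Bochner_Integration.integral_cong
             simp: indicator_E sum_distrib_right)
  also have "\<dots> \<le> (\<integral>\<omega>. (S N n \<omega>)\<^sup>2 \<partial>M)"
  proof -
    have S_sq: "integrable M (\<lambda>\<omega>. (S N n \<omega>)\<^sup>2)"
      by (rule integrable_abs_bounded[where B="(\<Sum>i<n. c i)\<^sup>2"], measurable)
         (auto intro: abs_le_imp_power2_le abs_S_le)
    then show ?thesis
      using integrable_real_mult_indicator[OF E S_sq]
      by (intro integral_mono) (auto simp: indicator_def mult.commute)
  qed
  also have "\<dots> \<le> (\<Sum>i\<in>{N..<n}. (c i)\<^sup>2)" by (rule integral_S_sq_le[OF \<open>N \<le> n\<close>])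
  finally show ?thesis
    using \<open>0 < \<epsilon>\<close> unfolding E_def by (simp add: field_simps)
qed

end

locale indep_bounded_centered_sq_summable = indep_bounded_centered +
  assumes sq_summable: "summable (\<lambda>k. (c k)\<^sup>2)"
begin

definition tail :: "nat \<Rightarrow> real" where "tail N = (\<Sum>i. (c (i + N))\<^sup>2)"

lemma sum_sq_le_tail: "(\<Sum>i\<in>{N..<n}. (c i)\<^sup>2) \<le> tail N"
proof -
  have "(\<Sum>i\<in>{N..<n}. (c i)\<^sup>2) = (\<Sum>i\<in>{0..<n-N}. (c (i + N))\<^sup>2)"
    by (subst sum.atLeastLessThan_shift_0) (simp add: comp_def add.commute)
  also have "\<dots> \<le> tail N" unfolding tail_def
    by (rule sum_le_suminf) (auto intro: summable_ignore_initial_segment[OF sq_summable])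
  finally show ?thesis .
qed

lemma tail_tendsto_0: "tail \<longlonglongrightarrow> 0"
  unfolding tail_def by (rule suminf_exist_split2[OF sq_summable])

lemma prob_exists_S_ge_le_tail:
  assumes "0 < \<epsilon>"
  shows "prob {\<omega>\<in>space M. \<exists>k\<ge>N. \<epsilon> \<le> \<bar>S N k \<omega>\<bar>} \<le> tail N / \<epsilon>\<^sup>2"
proof -
  define A where "A n = {\<omega>\<in>space M. \<exists>k\<in>{N..N+n}. \<epsilon> \<le> \<bar>S N k \<omega>\<bar>}" for n
  have "(\<Union>n. A n) = {\<omega>\<in>space M. \<exists>k\<ge>N. \<epsilon> \<le> \<bar>S N k \<omega>\<bar>}"
  proof (intro equalityI subsetI)
    fix \<omega> assume "\<omega> \<in> {\<omega>\<in>space M. \<exists>k\<ge>N. \<epsilon> \<le> \<bar>S N k \<omega>\<bar>}"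
    then obtain k where "\<omega> \<in> space M" "N \<le> k" "\<epsilon> \<le> \<bar>S N k \<omega>\<bar>" by auto
    then have "\<omega> \<in> A (k - N)" unfolding A_def by auto
    then show "\<omega> \<in> (\<Union>n. A n)" by blast
  qed (auto simp: A_def)
  moreover have "(\<lambda>n. prob (A n)) \<longlonglongrightarrow> prob (\<Union>n. A n)"
    by (rule finite_Lim_measure_incseq) (auto simp: A_def incseq_def intro: order_trans)
  moreover have "prob (A n) \<le> tail N / \<epsilon>\<^sup>2" for n
  proof -
    have "prob (A n) \<le> (\<Sum>i\<in>{N..<N+n}. (c i)\<^sup>2) / \<epsilon>\<^sup>2"
      unfolding A_def using assms by (intro kolmogorov_maximal_inequality) auto
    also have "\<dots> \<le> tail N / \<epsilon>\<^sup>2" by (intro divide_right_mono sum_sq_le_tail) auto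
    finally show ?thesis .
  qed
  ultimately show ?thesis by (intro LIMSEQ_le_const2) auto
qed

definition oscillating :: "nat \<Rightarrow> 'a set" where
  "oscillating j = {\<omega>\<in>space M. \<forall>N. \<exists>k\<ge>N. 1 / real (Suc j) \<le> \<bar>S N k \<omega>\<bar>}"

lemma oscillating_null: "oscillating j \<in> null_sets M"
proof -
  let ?e = "1 / real (Suc j)"
  have "oscillating j \<in> sets M" unfolding oscillating_def by measurable
  moreover have "prob (oscillating j) \<le> tail N / ?e\<^sup>2" for N
  proof -
    have "prob (oscillating j) \<le> prob {\<omega>\<in>space M. \<exists>k\<ge>N. ?e \<le> \<bar>S N k \<omega>\<bar>}"
      by (rule finite_measure_mono) (auto simp: oscillating_def)
    also have "\<dots> \<le> tail N / ?e\<^sup>2" by (rule prob_exists_S_ge_le_tail) auto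
    finally show ?thesis .
  qed
  moreover have "(\<lambda>N. tail N / ?e\<^sup>2) \<longlonglongrightarrow> 0"
    using tendsto_divide_zero[OF tail_tendsto_0] by blast
  ultimately have "prob (oscillating j) \<le> 0"
    by (intro LIMSEQ_le_const[where X="\<lambda>N. tail N / ?e\<^sup>2"]) auto
  with \<open>oscillating j \<in> sets M\<close> show ?thesis
    by (auto intro!: null_setsI simp: emeasure_eq_measure measure_le_0_iff)
qed

lemma summable_Y_if_not_oscillating:
  assumes "\<omega> \<in> space M" "\<forall>j. \<omega> \<notin> oscillating j"
  shows "summable (\<lambda>k. Y k \<omega>)"
proof -
  define T where "T n = (\<Sum>i<n. Y i \<omega>)" for n
  have S_eq: "S N k \<omega> = T k - T N" if "N \<le> k" for N k
  proof -
    have "{..<k} = {..<N} \<union> {N..<k}" using that by auto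
    then have "T k = T N + S N k \<omega>"
      unfolding S_def T_def by (simp add: sum.union_disjoint ivl_disj_int(2))
    then show ?thesis by simp
  qed
  have "Cauchy T"
  proof (rule metric_CauchyI)
    fix e :: real assume "0 < e"
    then obtain j where j: "inverse (real (Suc j)) < e / 2"
      using reals_Archimedean[of "e / 2"] by auto
    from assms have "\<not> (\<forall>N. \<exists>k\<ge>N. 1 / real (Suc j) \<le> \<bar>S N k \<omega>\<bar>)"
      unfolding oscillating_def by blast
    then obtain N where N: "\<And>k. k \<ge> N \<Longrightarrow> \<bar>S N k \<omega>\<bar> < 1 / real (Suc j)"
      by (meson not_le)
    have "dist (T m) (T n) < e" if "N \<le> m" "N \<le> n" for m n
      using N[OF that(1)] N[OF that(2)] j S_eq[OF that(1)] S_eq[OF that(2)]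
      unfolding dist_real_def inverse_eq_divide by linarith
    then show "\<exists>M. \<forall>m\<ge>M. \<forall>n\<ge>M. dist (T m) (T n) < e" by blast
  qed
  then show ?thesis unfolding summable_iff_convergent T_def[symmetric] by (simp add: Cauchy_convergent_iff)
qed

theorem AE_summable_Y: "AE \<omega> in M. summable (\<lambda>k. Y k \<omega>)"
proof -
  have "AE \<omega> in M. \<forall>j. \<omega> \<notin> oscillating j"
    unfolding AE_all_countable by (blast intro: AE_I' oscillating_null)
  with AE_space show ?thesis by eventually_elim (rule summable_Y_if_not_oscillating)
qed

end

section \<open>Averaging recursions\<close>

lemma abs_mult_nonneg_add_le:
  fixes a b x y :: real
  assumes "0 \<le> a" "0 \<le> b"
  shows "\<bar>a * x + b * y\<bar> \<le> a * \<bar>x\<bar> + b * \<bar>y\<bar>"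
  using abs_triangle_ineq[of "a * x" "b * y"] assms by (simp add: abs_mult)

lemma LIMSEQ_zeroI_abs_le:
  fixes X :: "nat \<Rightarrow> real"
  assumes "\<And>\<epsilon>. 0 < \<epsilon> \<Longrightarrow> eventually (\<lambda>n. \<bar>X n\<bar> \<le> \<epsilon>) sequentially"
  shows "X \<longlonglongrightarrow> 0"
proof (rule tendstoI)
  fix e :: real assume "0 < e"
  then have "eventually (\<lambda>n. \<bar>X n\<bar> \<le> e/2) sequentially" by (intro assms) auto
  then show "eventually (\<lambda>n. dist (X n) 0 < e) sequentially"
    by eventually_elim (use \<open>0 < e\<close> in auto)
qed

lemma LIMSEQ_zeroD_abs_le:
  fixes X :: "nat \<Rightarrow> real"
  assumes "X \<longlonglongrightarrow> 0" "0 < \<epsilon>"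
  shows "eventually (\<lambda>n. \<bar>X n\<bar> \<le> \<epsilon>) sequentially"
  using tendstoD[OF assms] by eventually_elim auto

lemma eventually_mult_le_1:
  fixes \<alpha> :: "nat \<Rightarrow> real"
  assumes "\<alpha> \<longlonglongrightarrow> 0" "0 < c"
  shows "eventually (\<lambda>k. c * \<alpha> k \<le> 1) sequentially"
proof -
  have "eventually (\<lambda>k. \<bar>\<alpha> k\<bar> \<le> 1 / c) sequentially"
    using assms by (intro LIMSEQ_zeroD_abs_le) auto
  then show ?thesis by eventually_elim (use assms(2) in \<open>auto simp: field_simps abs_le_iff\<close>)
qed

lemma LIMSEQ_zero_if_summable_power2:
  fixes \<alpha> :: "nat \<Rightarrow> real"
  assumes "summable (\<lambda>k. (\<alpha> k)\<^sup>2)"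
  shows "\<alpha> \<longlonglongrightarrow> 0"
proof -
  have "(\<lambda>k. (\<alpha> k)\<^sup>2) \<longlonglongrightarrow> 0" by (rule summable_LIMSEQ_zero[OF assms])
  then have "(\<lambda>k. sqrt ((\<alpha> k)\<^sup>2)) \<longlonglongrightarrow> sqrt 0" by (rule tendsto_real_sqrt)
  then have "(\<lambda>k. \<bar>\<alpha> k\<bar>) \<longlonglongrightarrow> 0" by simp
  then show ?thesis by (rule tendsto_rabs_zero_cancel)
qed

lemma le_exp_neg_sum_if_contracting:
  fixes \<tau> e :: "nat \<Rightarrow> real"
  assumes "\<And>k. k \<ge> K \<Longrightarrow> e (Suc k) \<le> (1 - \<tau> k) * e k" "\<And>k. 0 \<le> e k"
  shows "e (K + n) \<le> e K * exp (- (\<Sum>l<n. \<tau> (K + l)))"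
proof (induction n)
  case (Suc n)
  have "e (K + Suc n) \<le> (1 - \<tau> (K + n)) * e (K + n)" using assms(1)[of "K + n"] by simp
  also have "\<dots> \<le> exp (- \<tau> (K + n)) * e (K + n)"
    using exp_ge_add_one_self[of "- \<tau> (K + n)"] assms(2) by (intro mult_right_mono) auto
  also have "\<dots> \<le> exp (- \<tau> (K + n)) * (e K * exp (- (\<Sum>l<n. \<tau> (K + l))))"
    by (rule mult_left_mono[OF Suc.IH]) simp
  also have "\<dots> = e K * exp (- (\<Sum>l<Suc n. \<tau> (K + l)))"
    by (simp add: exp_add[symmetric] algebra_simps exp_diff)
  finally show ?case .
qed simp

lemma LIMSEQ_zero_if_contracting:
  fixes \<tau> e :: "nat \<Rightarrow> real"
  assumes "\<And>k. 0 \<le> \<tau> k" "\<not> summable \<tau>" "\<And>k. 0 \<le> e k"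
    and "eventually (\<lambda>k. e (Suc k) \<le> (1 - \<tau> k) * e k) sequentially"
  shows "e \<longlonglongrightarrow> 0"
proof (rule LIMSEQ_zeroI_abs_le)
  fix \<delta> :: real assume "0 < \<delta>"
  obtain K where K: "\<And>k. k \<ge> K \<Longrightarrow> e (Suc k) \<le> (1 - \<tau> k) * e k"
    using assms(4) unfolding eventually_sequentially by blast
  note decay = le_exp_neg_sum_if_contracting[where e=e and \<tau>=\<tau> and K=K, OF K assms(3)]
  have "\<exists>N. B < (\<Sum>l<N. \<tau> (K + l))" for B
  proof (rule ccontr)
    assume "\<not> ?thesis"
    then have "summable (\<lambda>l. \<tau> (l + K))"
      by (intro summableI_nonneg_bounded[where x=B]) (auto simp: assms(1) add.commute not_less)
    then show False using assms(2) by simp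
  qed
  then obtain N where N: "ln (max (e K) \<delta> / \<delta>) < (\<Sum>l<N. \<tau> (K + l))" by blast
  have "e (K + n) \<le> \<delta>" if "N \<le> n" for n
  proof -
    have "(\<Sum>l<N. \<tau> (K + l)) \<le> (\<Sum>l<n. \<tau> (K + l))"
      using that by (intro sum_mono2) (auto simp: assms(1))
    then have "exp (- (\<Sum>l<n. \<tau> (K + l))) \<le> exp (- ln (max (e K) \<delta> / \<delta>))"
      using N by simp
    also have "\<dots> = \<delta> / max (e K) \<delta>" using \<open>0 < \<delta>\<close> by (simp add: exp_minus)
    finally have "e K * exp (- (\<Sum>l<n. \<tau> (K + l))) \<le> e K * (\<delta> / max (e K) \<delta>)"
      using assms(3) by (rule mult_left_mono)
    also have "\<dots> \<le> \<delta>"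
      using assms(3)[of K] \<open>0 < \<delta>\<close> by (auto simp: field_simps max_def)
    finally show ?thesis using decay[of n] by linarith
  qed
  then have "\<bar>e k\<bar> \<le> \<delta>" if "K + N \<le> k" for k
  proof -
    have "K + (k - K) = k" "N \<le> k - K" using that by auto
    then show ?thesis using \<open>\<And>n. N \<le> n \<Longrightarrow> e (K + n) \<le> \<delta>\<close>[of "k - K"] assms(3)[of k] by simp
  qed
  then show "eventually (\<lambda>k. \<bar>e k\<bar> \<le> \<delta>) sequentially"
    unfolding eventually_sequentially by blast
qed

lemma eventually_le_if_averaging:
  fixes \<tau> u v :: "nat \<Rightarrow> real"
  assumes "\<And>k. 0 \<le> \<tau> k" "\<not> summable \<tau>"
    and "eventually (\<lambda>k. \<tau> k \<le> 1 \<and> u (Suc k) \<le> (1 - \<tau> k) * u k + \<tau> k * v k \<and> v k \<le> w)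
           sequentially"
    and "0 < \<delta>"
  shows "eventually (\<lambda>k. u k \<le> w + \<delta>) sequentially"
proof -
  define e where "e k = max (u k - w) 0" for k
  have "eventually (\<lambda>k. e (Suc k) \<le> (1 - \<tau> k) * e k) sequentially"
    using assms(3)
  proof eventually_elim
    case (elim k)
    then have "u (Suc k) - w \<le> (1 - \<tau> k) * (u k - w)"
      using mult_left_mono[of "v k" w "\<tau> k"] assms(1)[of k] by (simp add: algebra_simps)
    also have "\<dots> \<le> (1 - \<tau> k) * e k" using elim by (intro mult_left_mono) (auto simp: e_def)
    finally show ?case using elim by (simp add: e_def)
  qed
  then have "e \<longlonglongrightarrow> 0" using assms(1,2) by (intro LIMSEQ_zero_if_contracting) (auto simp: e_def)
  from LIMSEQ_zeroD_abs_le[OF this assms(4)] show ?thesis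
    by eventually_elim (auto simp: e_def)
qed

lemma LIMSEQ_zero_if_averaging:
  fixes \<tau> Y v :: "nat \<Rightarrow> real"
  assumes "\<And>k. 0 \<le> \<tau> k" "\<not> summable \<tau>" "v \<longlonglongrightarrow> 0"
    and "eventually (\<lambda>k. \<tau> k \<le> 1 \<and> \<bar>Y (Suc k)\<bar> \<le> (1 - \<tau> k) * \<bar>Y k\<bar> + \<tau> k * v k) sequentially"
  shows "Y \<longlonglongrightarrow> 0"
proof (rule LIMSEQ_zeroI_abs_le)
  fix \<epsilon> :: real assume "0 < \<epsilon>"
  then have "0 < \<epsilon>/2" by simp
  from assms(4) LIMSEQ_zeroD_abs_le[OF assms(3) this]
  have "eventually (\<lambda>k. \<tau> k \<le> 1 \<and> \<bar>Y (Suc k)\<bar> \<le> (1 - \<tau> k) * \<bar>Y k\<bar> + \<tau> k * v k \<and> v k \<le> \<epsilon>/2)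
          sequentially"
    by eventually_elim auto
  from eventually_le_if_averaging[OF assms(1,2) this \<open>0 < \<epsilon>/2\<close>]
  have "eventually (\<lambda>k. \<bar>Y k\<bar> \<le> \<epsilon>/2 + \<epsilon>/2) sequentially" .
  then show "eventually (\<lambda>k. \<bar>Y k\<bar> \<le> \<epsilon>) sequentially" by simp
qed

text \<open>Summation by parts against the tails \<open>r k = (\<Sum>l. u (l + k))\<close>: \<open>W k + r k * V k\<close>
  satisfies an averaging recursion whose inputs vanish.\<close>
lemma LIMSEQ_zero_if_summable_noise:
  fixes \<alpha> u V W :: "nat \<Rightarrow> real"
  assumes c: "0 < c" and \<alpha>: "\<And>k. 0 \<le> \<alpha> k" "\<alpha> \<longlonglongrightarrow> 0" "\<not> summable \<alpha>"
    and u: "summable u" and V: "\<And>k. \<bar>V k\<bar> \<le> B" "\<And>k. \<bar>V (Suc k) - V k\<bar> \<le> L * \<alpha> k"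
    and W: "\<And>k. W (Suc k) = (1 - c * \<alpha> k) * W k + u k * V k"
  shows "W \<longlonglongrightarrow> 0"
proof -
  define r where "r k = (\<Sum>l. u (l + k))" for k
  have r: "r \<longlonglongrightarrow> 0" unfolding r_def by (rule suminf_exist_split2[OF u])
  have u_eq: "u k = r k - r (Suc k)" for k
    using suminf_split_head[of "\<lambda>l. u (l + k)"] u by (simp add: r_def)
  have B: "0 \<le> B" using V(1)[of 0] by linarith
  define Y where "Y k = W k + r k * V k" for k
  define v where "v k = \<bar>r k\<bar> * B + \<bar>r (Suc k)\<bar> * L / c" for k
  have "v \<longlonglongrightarrow> \<bar>0\<bar> * B + \<bar>0\<bar> * L / c"
    unfolding v_def using c by (intro tendsto_intros r LIMSEQ_Suc[OF r]) auto
  then have v: "v \<longlonglongrightarrow> 0" by simp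
  have Y_Suc: "\<bar>Y (Suc k)\<bar> \<le> (1 - c * \<alpha> k) * \<bar>Y k\<bar> + c * \<alpha> k * v k" if "c * \<alpha> k \<le> 1" for k
  proof -
    have "Y (Suc k) = (1 - c * \<alpha> k) * Y k + c * \<alpha> k * (r k * V k) + r (Suc k) * (V (Suc k) - V k)"
      unfolding Y_def W u_eq by (simp add: algebra_simps)
    also have "\<bar>\<dots>\<bar> \<le> (1 - c * \<alpha> k) * \<bar>Y k\<bar> + c * \<alpha> k * (\<bar>r k\<bar> * \<bar>V k\<bar>)
                     + \<bar>r (Suc k)\<bar> * \<bar>V (Suc k) - V k\<bar>"
      using abs_triangle_ineq[of "(1 - c * \<alpha> k) * Y k + c * \<alpha> k * (r k * V k)"
                                 "r (Suc k) * (V (Suc k) - V k)"]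
        abs_mult_nonneg_add_le[of "1 - c * \<alpha> k" "c * \<alpha> k" "Y k" "r k * V k"] that c \<alpha>(1)[of k]
      by (simp add: abs_mult)
    also have "\<dots> \<le> (1 - c * \<alpha> k) * \<bar>Y k\<bar> + c * \<alpha> k * (\<bar>r k\<bar> * B) + \<bar>r (Suc k)\<bar> * (L * \<alpha> k)"
      using that c \<alpha>(1)[of k] V[of k] by (intro add_mono mult_left_mono) auto
    also have "\<dots> = (1 - c * \<alpha> k) * \<bar>Y k\<bar> + c * \<alpha> k * v k"
      using c by (simp add: v_def algebra_simps)
    finally show ?thesis .
  qed
  have "Y \<longlonglongrightarrow> 0"
  proof (rule LIMSEQ_zero_if_averaging[where \<tau>="\<lambda>k. c * \<alpha> k", OF _ _ v])
    show "eventually (\<lambda>k. c * \<alpha> k \<le> 1 \<and> \<bar>Y (Suc k)\<bar> \<le> (1 - c * \<alpha> k) * \<bar>Y k\<bar> + c * \<alpha> k * v k)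
            sequentially"
      using eventually_mult_le_1[OF \<alpha>(2) c] by eventually_elim (simp add: Y_Suc)
  qed (use c \<alpha> in auto)
  moreover have "(\<lambda>k. r k * V k) \<longlonglongrightarrow> 0"
    by (rule Lim_null_comparison[where g="\<lambda>k. \<bar>r k\<bar> * B"])
       (auto intro!: always_eventually mult_left_mono V(1) tendsto_mult_left_zero tendsto_rabs_zero r
             simp: abs_mult)
  ultimately have "(\<lambda>k. Y k - r k * V k) \<longlonglongrightarrow> 0 - 0" by (rule tendsto_diff)
  then show ?thesis by (simp add: Y_def)
qed

section \<open>The Bellman optimality operator\<close>

lemma abs_Max_range_le:
  fixes f :: "'a::finite \<Rightarrow> real"
  assumes "\<And>a. \<bar>f a\<bar> \<le> C"
  shows "\<bar>Max (range f)\<bar> \<le> C"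
proof -
  have "Max (range f) \<in> range f" by (rule Max_in) auto
  then obtain a where "Max (range f) = f a" by blast
  then show ?thesis using assms[of a] by simp
qed

lemma abs_Max_range_diff_le:
  fixes f g :: "'a::finite \<Rightarrow> real"
  assumes "\<And>a. \<bar>f a - g a\<bar> \<le> D"
  shows "\<bar>Max (range f) - Max (range g)\<bar> \<le> D"
proof -
  have "Max (range f) \<in> range f" by (rule Max_in) auto
  then obtain a where a: "Max (range f) = f a" by blast
  have "Max (range g) \<in> range g" by (rule Max_in) auto
  then obtain b where b: "Max (range g) = g b" by blast
  have "f b \<le> f a" unfolding a[symmetric] by (rule Max_ge) auto
  moreover have "g a \<le> g b" unfolding b[symmetric] by (rule Max_ge) auto
  ultimately show ?thesis unfolding a b using assms[of a] assms[of b] by linarith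
qed

definition bellman :: "('s::finite \<Rightarrow> 'a::finite \<Rightarrow> 's pmf) \<Rightarrow> ('s \<Rightarrow> 'a \<Rightarrow> 's \<Rightarrow> real) \<Rightarrow> real
    \<Rightarrow> ('s,'a) qfun \<Rightarrow> ('s,'a) qfun" where
  "bellman P r \<gamma> Q = (\<lambda>s a. \<Sum>s'\<in>UNIV. pmf (P s a) s' * (r s a s' + \<gamma> * Max (range (Q s'))))"

lemma sum_pmf_finite_UNIV: "(\<Sum>x\<in>UNIV. pmf (N :: 'a::finite pmf) x) = 1"
  by (rule sum_pmf_eq_1) auto

lemma abs_expectation_le:
  fixes N :: "'a::finite pmf"
  assumes "\<And>x. \<bar>f x\<bar> \<le> E"
  shows "\<bar>\<Sum>x\<in>UNIV. pmf N x * f x\<bar> \<le> E"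
proof -
  have "\<bar>\<Sum>x\<in>UNIV. pmf N x * f x\<bar> \<le> (\<Sum>x\<in>UNIV. pmf N x * E)"
    by (rule order_trans[OF sum_abs sum_mono]) (simp add: abs_mult assms mult_left_mono)
  also have "\<dots> = E" by (simp add: sum_distrib_right[symmetric] sum_pmf_finite_UNIV)
  finally show ?thesis .
qed

lemma abs_bellman_diff_le:
  assumes "0 \<le> \<gamma>" "\<And>s a. \<bar>Q s a - Q' s a\<bar> \<le> E"
  shows "\<bar>bellman P r \<gamma> Q s a - bellman P r \<gamma> Q' s a\<bar> \<le> \<gamma> * E"
proof -
  have "bellman P r \<gamma> Q s a - bellman P r \<gamma> Q' s a
      = (\<Sum>s'\<in>UNIV. pmf (P s a) s' * (\<gamma> * (Max (range (Q s')) - Max (range (Q' s')))))"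
    unfolding bellman_def by (simp add: sum_subtractf[symmetric] algebra_simps)
  also have "\<bar>\<dots>\<bar> \<le> \<gamma> * E"
    using assms by (intro abs_expectation_le) (simp add: abs_mult mult_left_mono abs_Max_range_diff_le)
  finally show ?thesis .
qed

definition qnorm :: "('s::finite,'a::finite) qfun \<Rightarrow> real" where
  "qnorm Q = (\<Sum>i\<in>UNIV. \<bar>Q (fst i) (snd i)\<bar>)"

lemma abs_le_qnorm: "\<bar>Q s a\<bar> \<le> qnorm Q"
  unfolding qnorm_def using member_le_sum[of "(s,a)" UNIV "\<lambda>i. \<bar>Q (fst i) (snd i)\<bar>"] by auto

lemma abs_bellman_iter_diff_le:
  assumes "0 \<le> \<gamma>"
  shows "\<bar>(bellman P r \<gamma> ^^ n) Q s a - (bellman P r \<gamma> ^^ n) Q' s a\<bar>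
         \<le> \<gamma> ^ n * qnorm (\<lambda>s a. Q s a - Q' s a)"
proof (induction n arbitrary: s a)
  case 0
  show ?case using abs_le_qnorm[of "\<lambda>s a. Q s a - Q' s a"] by simp
next
  case (Suc n)
  have "\<bar>bellman P r \<gamma> ((bellman P r \<gamma> ^^ n) Q) s a - bellman P r \<gamma> ((bellman P r \<gamma> ^^ n) Q') s a\<bar>
      \<le> \<gamma> * (\<gamma> ^ n * qnorm (\<lambda>s a. Q s a - Q' s a))"
    by (rule abs_bellman_diff_le[OF assms Suc.IH])
  then show ?case by (simp add: mult.assoc)
qed

lemma bellman_fixpoint_unique:
  assumes "0 \<le> \<gamma>" "\<gamma> < 1" "bellman P r \<gamma> Q = Q" "bellman P r \<gamma> Q' = Q'"
  shows "Q = Q'"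
proof -
  have iter: "(bellman P r \<gamma> ^^ n) Q = Q" "(bellman P r \<gamma> ^^ n) Q' = Q'" for n
    by (induction n) (simp_all add: assms(3,4))
  have "(\<lambda>n. \<gamma> ^ n * qnorm (\<lambda>s a. Q s a - Q' s a)) \<longlonglongrightarrow> 0"
    using assms by (intro tendsto_mult_left_zero LIMSEQ_power_zero) auto
  then have "\<bar>Q s a - Q' s a\<bar> \<le> 0" for s a
    using abs_bellman_iter_diff_le[OF assms(1), of _ P r Q s a Q'] unfolding iter
    by (intro LIMSEQ_le_const) auto
  then show ?thesis by (auto simp: fun_eq_iff)
qed

text \<open>Value iteration from \<open>0\<close> converges, since successive iterates differ by \<open>O(\<gamma>\<^sup>n)\<close>.\<close>
lemma bellman_iter_convergent:
  assumes "0 \<le> \<gamma>" "\<gamma> < 1"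
  shows "convergent (\<lambda>n. (bellman P r \<gamma> ^^ n) (\<lambda>_ _. 0) s a)"
proof -
  define Q where "Q n = (bellman P r \<gamma> ^^ n) (\<lambda>_ _. 0)" for n
  define E where "E = qnorm (\<lambda>s a. Q 1 s a - Q 0 s a)"
  have step: "norm (Q (Suc n) s a - Q n s a) \<le> \<gamma> ^ n * E" for n
  proof -
    have "Q (Suc n) = (bellman P r \<gamma> ^^ n) (Q 1)" "Q n = (bellman P r \<gamma> ^^ n) (Q 0)"
      unfolding Q_def by (simp_all add: funpow_swap1 funpow_add[symmetric])
    then show ?thesis
      using abs_bellman_iter_diff_le[OF assms(1), of n P r "Q 1" s a "Q 0"] by (simp only: E_def real_norm_def)
  qed
  have "summable (\<lambda>n. \<gamma> ^ n * E)"
    using assms by (intro summable_mult2 summable_geometric) simp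
  then have "summable (\<lambda>n. Q (Suc n) s a - Q n s a)"
    using step by (rule summable_comparison_test'[where N=0])
  then have "convergent (\<lambda>m. \<Sum>n<m. Q (Suc n) s a - Q n s a)"
    by (simp only: summable_iff_convergent)
  then have "convergent (\<lambda>m. Q m s a - Q 0 s a)"
    by (simp only: sum_lessThan_telescope[of "\<lambda>n. Q n s a"])
  then have "convergent (\<lambda>m. (Q m s a - Q 0 s a) + Q 0 s a)"
    by (intro convergent_add convergent_const)
  then show ?thesis by (simp add: Q_def)
qed

lemma bellman_fixpoint_exists:
  fixes P :: "'s::finite \<Rightarrow> 'a::finite \<Rightarrow> 's pmf"
  assumes "0 \<le> \<gamma>" "\<gamma> < 1"
  shows "\<exists>Q. bellman P r \<gamma> Q = Q"
proof -
  define Q where "Q n = (bellman P r \<gamma> ^^ n) (\<lambda>_ _. 0)" for n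
  define L where "L s a = lim (\<lambda>n. Q n s a)" for s a
  have conv: "(\<lambda>n. Q n s a) \<longlonglongrightarrow> L s a" for s a
    using bellman_iter_convergent[OF assms] unfolding L_def Q_def by (rule convergent_LIMSEQ_iff[THEN iffD1])
  have "(\<lambda>n. qnorm (\<lambda>s a. L s a - Q n s a))
          \<longlonglongrightarrow> (\<Sum>i\<in>(UNIV::('s \<times> 'a) set). \<bar>L (fst i) (snd i) - L (fst i) (snd i)\<bar>)"
    unfolding qnorm_def by (intro tendsto_sum tendsto_rabs tendsto_diff tendsto_const conv)
  then have qnorm_tendsto: "(\<lambda>n. \<gamma> * qnorm (\<lambda>s a. L s a - Q n s a)) \<longlonglongrightarrow> 0"
    by (simp add: tendsto_mult_right_zero)
  have dist_le: "norm (bellman P r \<gamma> L s a - Q (Suc n) s a) \<le> \<gamma> * qnorm (\<lambda>s a. L s a - Q n s a)"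
    for n s a
    unfolding Q_def funpow.simps comp_def real_norm_def
    by (rule abs_bellman_diff_le[OF assms(1)]) (rule abs_le_qnorm[of "\<lambda>s a. L s a - Q n s a", simplified Q_def])
  have "(\<lambda>n. Q (Suc n) s a) \<longlonglongrightarrow> bellman P r \<gamma> L s a" for s a
  proof -
    have "(\<lambda>n. bellman P r \<gamma> L s a - Q (Suc n) s a) \<longlonglongrightarrow> 0"
      by (rule Lim_null_comparison[OF always_eventually qnorm_tendsto]) (rule allI, rule dist_le)
    from tendsto_diff[OF tendsto_const[of "bellman P r \<gamma> L s a"] this] show ?thesis by simp
  qed
  then have "bellman P r \<gamma> L s a = L s a" for s a
    using LIMSEQ_Suc[OF conv] by (rule LIMSEQ_unique)
  then show ?thesis by (auto simp: fun_eq_iff)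
qed

lemma bellman_Qstar:
  assumes "0 \<le> \<gamma>" "\<gamma> < 1"
  shows "bellman P r \<gamma> (Qstar P r \<gamma>) = Qstar P r \<gamma>"
proof -
  obtain Q where Q: "bellman P r \<gamma> Q = Q" using bellman_fixpoint_exists[OF assms] by blast
  have "(\<forall>s a. Q' s a = bellman P r \<gamma> Q' s a) \<longleftrightarrow> bellman P r \<gamma> Q' = Q'" for Q'
    by (auto simp: fun_eq_iff)
  then have "Qstar P r \<gamma> = (THE Q. bellman P r \<gamma> Q = Q)"
    unfolding Qstar_def by (simp add: bellman_def)
  also have "\<dots> = Q" using Q bellman_fixpoint_unique[OF assms _ Q] by blast
  finally show ?thesis using Q by simp
qed

section \<open>A sample path of SGT2-QL\<close>

text \<open>The only probabilistic input is the summability of the weighted sampling noise along the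
  path \<open>xs\<close>. The two iterates are \<open>Q k True = Q\<^sup>A\<^sub>k\<close> and \<open>Q k False = Q\<^sup>B\<^sub>k\<close>.\<close>
locale sgt2_path =
  fixes r :: "'s::finite \<Rightarrow> 'a::finite \<Rightarrow> 's \<Rightarrow> real" and \<gamma> \<beta> :: real and \<alpha> :: "nat \<Rightarrow> real"
    and xs :: "nat \<Rightarrow> 's \<times> 'a \<times> 's" and QA0 QB0 :: "'s \<Rightarrow> 'a \<Rightarrow> real"
    and P :: "'s \<Rightarrow> 'a \<Rightarrow> 's pmf" and d :: "'s \<Rightarrow> 'a \<Rightarrow> real" and Qopt :: "'s \<Rightarrow> 'a \<Rightarrow> real"
  assumes gamma: "0 \<le> \<gamma>" "\<gamma> < 1" and beta: "0 < \<beta>"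
    and alpha_nonneg: "\<And>k. 0 \<le> \<alpha> k" and alpha_lim: "\<alpha> \<longlonglongrightarrow> 0"
    and alpha_not_summable: "\<not> summable \<alpha>"
    and d_pos: "\<And>s a. 0 < d s a"
    and noise_summable: "\<And>s a s'.
          summable (\<lambda>k. \<alpha> k * ((if xs k = (s,a,s') then 1 else 0) - d s a * pmf (P s a) s'))"
    and bellman_Qopt: "bellman P r \<gamma> Qopt = Qopt"
begin

definition Q :: "nat \<Rightarrow> bool \<Rightarrow> 's \<Rightarrow> 'a \<Rightarrow> real" where
  "Q k b = (if b then fst else snd) (sgt2 r \<gamma> \<beta> \<alpha> xs QA0 QB0 k)"

definition Qmax :: "nat \<Rightarrow> bool \<Rightarrow> 's \<Rightarrow> real" where
  "Qmax k b s' = Max (range (Q k b s'))"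

definition td :: "nat \<Rightarrow> bool \<Rightarrow> 's \<Rightarrow> 'a \<Rightarrow> 's \<Rightarrow> real" where
  "td k b s a s' = r s a s' + \<gamma> * Qmax k (\<not> b) s' - Q k b s a + \<beta> * (Q k (\<not> b) s a - Q k b s a)"

lemma Q_Suc:
  "Q (Suc k) b s a = Q k b s a
     + \<alpha> k * (if (s, a) = (fst (xs k), fst (snd (xs k))) then td k b s a (snd (snd (xs k))) else 0)"
proof -
  obtain s0 a0 s0' where x: "xs k = (s0, a0, s0')" by (cases "xs k") auto
  obtain QA QB where "sgt2 r \<gamma> \<beta> \<alpha> xs QA0 QB0 k = (QA, QB)"
    by (cases "sgt2 r \<gamma> \<beta> \<alpha> xs QA0 QB0 k") auto
  then show ?thesis by (cases b) (auto simp: Q_def td_def Qmax_def x Let_def)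
qed

definition rmax :: real where
  "rmax = Max (range (\<lambda>(s, a, s'). \<bar>r s a s'\<bar>))"

lemma abs_r_le: "\<bar>r s a s'\<bar> \<le> rmax"
  unfolding rmax_def by (rule Max_ge) (auto intro!: image_eqI[where x="(s,a,s')"])

lemma abs_Qmax_le: "(\<And>a. \<bar>Q k b s' a\<bar> \<le> C) \<Longrightarrow> \<bar>Qmax k b s'\<bar> \<le> C"
  unfolding Qmax_def by (rule abs_Max_range_le)

text \<open>Once \<open>\<alpha> k (1 + \<beta>) \<le> 1\<close>, an update is a convex combination of the old value and a target
  bounded by \<open>rmax + (\<gamma> + \<beta>) C\<close>, so the bound \<open>C\<close> is invariant as soon as \<open>rmax \<le> (1 - \<gamma>) C\<close>.\<close>
lemma abs_Q_Suc_le: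
  assumes step: "(1 + \<beta>) * \<alpha> k \<le> 1" and C: "rmax \<le> (1 - \<gamma>) * C"
    and Q_le: "\<And>b s a. \<bar>Q k b s a\<bar> \<le> C"
  shows "\<bar>Q (Suc k) b s a\<bar> \<le> C"
proof (cases "(s, a) = (fst (xs k), fst (snd (xs k)))")
  case True
  let ?s' = "snd (snd (xs k))" and ?t = "\<alpha> k"
  have t: "0 \<le> ?t" "0 \<le> 1 - (1 + \<beta>) * ?t" using alpha_nonneg[of k] step by auto
  have eq: "Q (Suc k) b s a = (1 - (1 + \<beta>) * ?t) * Q k b s a
          + ?t * (r s a ?s' + (\<gamma> * Qmax k (\<not> b) ?s' + \<beta> * Q k (\<not> b) s a))"
    using True by (simp add: Q_Suc td_def algebra_simps)
  have "\<bar>Q (Suc k) b s a\<bar> \<le> (1 - (1 + \<beta>) * ?t) * \<bar>Q k b s a\<bar>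
          + ?t * (\<bar>r s a ?s'\<bar> + (\<gamma> * \<bar>Qmax k (\<not> b) ?s'\<bar> + \<beta> * \<bar>Q k (\<not> b) s a\<bar>))"
  proof -
    have "\<bar>r s a ?s' + (\<gamma> * Qmax k (\<not> b) ?s' + \<beta> * Q k (\<not> b) s a)\<bar>
        \<le> \<bar>r s a ?s'\<bar> + (\<gamma> * \<bar>Qmax k (\<not> b) ?s'\<bar> + \<beta> * \<bar>Q k (\<not> b) s a\<bar>)"
      using abs_triangle_ineq[of "r s a ?s'" "\<gamma> * Qmax k (\<not> b) ?s' + \<beta> * Q k (\<not> b) s a"]
        abs_mult_nonneg_add_le[of \<gamma> \<beta> "Qmax k (\<not> b) ?s'" "Q k (\<not> b) s a"] gamma beta
      by linarith
    from mult_left_mono[OF this t(1)] show ?thesis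
      unfolding eq using abs_mult_nonneg_add_le[OF t(2,1), of "Q k b s a"
          "r s a ?s' + (\<gamma> * Qmax k (\<not> b) ?s' + \<beta> * Q k (\<not> b) s a)"] by linarith
  qed
  also have "\<dots> \<le> (1 - (1 + \<beta>) * ?t) * C + ?t * (rmax + (\<gamma> * C + \<beta> * C))"
  proof -
    have "\<bar>r s a ?s'\<bar> + (\<gamma> * \<bar>Qmax k (\<not> b) ?s'\<bar> + \<beta> * \<bar>Q k (\<not> b) s a\<bar>)
        \<le> rmax + (\<gamma> * C + \<beta> * C)"
      using abs_r_le[of s a ?s'] mult_left_mono[OF abs_Qmax_le[OF Q_le] gamma(1), of "\<not> b" ?s']
        mult_left_mono[OF Q_le less_imp_le[OF beta], of "\<not> b" s a] by linarith
    then show ?thesis by (rule add_mono[OF mult_left_mono[OF Q_le t(2)] mult_left_mono[OF _ t(1)]])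
  qed
  also have "\<dots> = C + ?t * (rmax - (1 - \<gamma>) * C)" by (simp add: algebra_simps)
  also have "\<dots> \<le> C" using C t(1) by (simp add: mult_nonneg_nonpos)
  finally show ?thesis .
next
  case False
  then have "Q (Suc k) b s a = Q k b s a" by (simp only: Q_Suc if_False)
  then show ?thesis using Q_le by simp
qed

lemma Q_bounded: "\<exists>C. rmax \<le> (1 - \<gamma>) * C \<and> (\<forall>k b s a. \<bar>Q k b s a\<bar> \<le> C)"
proof -
  have "eventually (\<lambda>k. (1 + \<beta>) * \<alpha> k \<le> 1) sequentially"
    using beta by (intro eventually_mult_le_1[OF alpha_lim]) simp
  then obtain K where K: "\<And>k. k \<ge> K \<Longrightarrow> (1 + \<beta>) * \<alpha> k \<le> 1"
    unfolding eventually_sequentially by blast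
  define S where "S k = (\<Sum>i\<in>UNIV. \<bar>Q k (fst i) (fst (snd i)) (snd (snd i))\<bar>)" for k
  define C where "C = max (\<Sum>k\<le>K. S k) (rmax / (1 - \<gamma>))"
  have S_nonneg: "0 \<le> S k" for k unfolding S_def by (intro sum_nonneg) auto
  have Q_le_S: "\<bar>Q k b s a\<bar> \<le> S k" for k b s a
    unfolding S_def
    using member_le_sum[where i="(b,s,a)" and A=UNIV and f="\<lambda>i. \<bar>Q k (fst i) (fst (snd i)) (snd (snd i))\<bar>"]
    by auto
  have early: "\<bar>Q k b s a\<bar> \<le> C" if "k \<le> K" for k b s a
  proof -
    have "S k \<le> (\<Sum>k\<le>K. S k)" using that by (intro member_le_sum) (auto simp: S_nonneg)
    then show ?thesis using Q_le_S[of k b s a] unfolding C_def by linarith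
  qed
  have C: "rmax \<le> (1 - \<gamma>) * C"
  proof -
    have "rmax / (1 - \<gamma>) \<le> C" unfolding C_def by simp
    then show ?thesis using gamma by (simp add: field_simps)
  qed
  have late: "\<forall>b s a. \<bar>Q k b s a\<bar> \<le> C" if "K \<le> k" for k
    using that
  proof (induction k rule: dec_induct)
    case base then show ?case using early by auto
  next
    case (step k)
    then show ?case using abs_Q_Suc_le[OF K[OF step.hyps(1)] C] by blast
  qed
  have "\<bar>Q k b s a\<bar> \<le> C" for k b s a
  proof (cases "k \<le> K")
    case False then show ?thesis using late[of k] by simp
  qed (rule early)
  with C show ?thesis by blast
qed

definition Qbound :: real where
  "Qbound = (SOME C. rmax \<le> (1 - \<gamma>) * C \<and> (\<forall>k b s a. \<bar>Q k b s a\<bar> \<le> C))"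

lemma Qbound: "rmax \<le> (1 - \<gamma>) * Qbound" "\<bar>Q k b s a\<bar> \<le> Qbound"
  using someI_ex[OF Q_bounded] unfolding Qbound_def[symmetric] by auto

definition td_bound :: real where "td_bound = rmax + \<gamma> * Qbound + (1 + 2 * \<beta>) * Qbound"

lemma abs_td_le: "\<bar>td k b s a s'\<bar> \<le> td_bound"
proof -
  let ?M = "Qmax k (\<not> b) s'" and ?Q = "Q k b s a" and ?Q' = "Q k (\<not> b) s a"
  have "\<bar>\<gamma> * ?M\<bar> \<le> \<gamma> * Qbound" "\<bar>\<beta> * (?Q' - ?Q)\<bar> \<le> \<beta> * (Qbound + Qbound)"
    using gamma beta abs_Qmax_le[OF Qbound(2)] Qbound(2)[of k "\<not> b" s a] Qbound(2)[of k b s a]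
    by (auto simp: abs_mult intro!: mult_left_mono order_trans[OF abs_triangle_ineq4])
  moreover have "\<bar>td k b s a s'\<bar> \<le> \<bar>r s a s'\<bar> + \<bar>\<gamma> * ?M\<bar> + \<bar>?Q\<bar> + \<bar>\<beta> * (?Q' - ?Q)\<bar>"
    unfolding td_def
    using abs_triangle_ineq[of "r s a s' + \<gamma> * ?M - ?Q" "\<beta> * (?Q' - ?Q)"]
      abs_triangle_ineq4[of "r s a s' + \<gamma> * ?M" ?Q] abs_triangle_ineq[of "r s a s'" "\<gamma> * ?M"]
    by linarith
  ultimately have "\<bar>td k b s a s'\<bar> \<le> rmax + \<gamma> * Qbound + Qbound + \<beta> * (Qbound + Qbound)"
    using abs_r_le[of s a s'] Qbound(2)[of k b s a] by linarith
  then show ?thesis by (simp add: td_bound_def algebra_simps)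
qed

lemma abs_Q_Suc_diff_le: "\<bar>Q (Suc k) b s a - Q k b s a\<bar> \<le> \<alpha> k * td_bound"
proof -
  have "0 \<le> td_bound" using abs_td_le[of 0 b s a undefined] by linarith
  then show ?thesis
    using mult_left_mono[OF abs_td_le alpha_nonneg[of k]] alpha_nonneg[of k]
    by (simp add: Q_Suc abs_mult)
qed

lemma abs_Qmax_Suc_diff_le: "\<bar>Qmax (Suc k) b s' - Qmax k b s'\<bar> \<le> \<alpha> k * td_bound"
  unfolding Qmax_def by (rule abs_Max_range_diff_le) (rule abs_Q_Suc_diff_le)

lemma abs_td_Suc_diff_le:
  "\<bar>td (Suc k) b s a s' - td k b s a s'\<bar> \<le> ((\<gamma> + 1 + 2 * \<beta>) * td_bound) * \<alpha> k"
proof -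
  let ?dM = "Qmax (Suc k) (\<not> b) s' - Qmax k (\<not> b) s'"
    and ?dQ = "Q (Suc k) b s a - Q k b s a" and ?dQ' = "Q (Suc k) (\<not> b) s a - Q k (\<not> b) s a"
  have "td (Suc k) b s a s' - td k b s a s' = \<gamma> * ?dM - (1 + \<beta>) * ?dQ + \<beta> * ?dQ'"
    unfolding td_def by (simp add: algebra_simps)
  moreover have "\<bar>\<gamma> * ?dM - (1 + \<beta>) * ?dQ + \<beta> * ?dQ'\<bar>
      \<le> \<bar>\<gamma> * ?dM\<bar> + \<bar>(1 + \<beta>) * ?dQ\<bar> + \<bar>\<beta> * ?dQ'\<bar>"
    using abs_triangle_ineq[of "\<gamma> * ?dM - (1 + \<beta>) * ?dQ" "\<beta> * ?dQ'"]
      abs_triangle_ineq4[of "\<gamma> * ?dM" "(1 + \<beta>) * ?dQ"] by linarith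
  moreover have "\<bar>\<gamma> * ?dM\<bar> \<le> \<gamma> * (\<alpha> k * td_bound)"
    "\<bar>(1 + \<beta>) * ?dQ\<bar> \<le> (1 + \<beta>) * (\<alpha> k * td_bound)" "\<bar>\<beta> * ?dQ'\<bar> \<le> \<beta> * (\<alpha> k * td_bound)"
    using gamma beta abs_Qmax_Suc_diff_le abs_Q_Suc_diff_le
    by (auto simp: abs_mult intro!: mult_left_mono)
  ultimately show ?thesis by (simp add: algebra_simps)
qed

definition freq :: "'s \<Rightarrow> 'a \<Rightarrow> 's \<Rightarrow> real" where "freq s a s' = d s a * pmf (P s a) s'"

definition \<xi> :: "nat \<Rightarrow> 's \<Rightarrow> 'a \<Rightarrow> 's \<Rightarrow> real" where
  "\<xi> k s a s' = (if xs k = (s,a,s') then 1 else 0) - freq s a s'"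

definition target :: "nat \<Rightarrow> bool \<Rightarrow> 's \<Rightarrow> 'a \<Rightarrow> real" where
  "target k b s a = bellman P r \<gamma> (Q k (\<not> b)) s a + \<beta> * Q k (\<not> b) s a"

definition noise :: "nat \<Rightarrow> bool \<Rightarrow> 's \<Rightarrow> 'a \<Rightarrow> real" where
  "noise k b s a = (\<Sum>s'\<in>UNIV. \<xi> k s a s' * td k b s a s')"

definition rate :: "'s \<Rightarrow> 'a \<Rightarrow> real" where "rate s a = d s a * (1 + \<beta>)"

lemma rate_pos: "0 < rate s a"
  unfolding rate_def using d_pos[of s a] beta by simp

lemma sum_sample_indicator_td:
  "(\<Sum>s'\<in>UNIV. (if xs k = (s,a,s') then 1 else 0) * td k b s a s')
   = (if (s, a) = (fst (xs k), fst (snd (xs k))) then td k b s a (snd (snd (xs k))) else 0)"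
proof -
  obtain s0 a0 s0' where x: "xs k = (s0, a0, s0')" by (cases "xs k") auto
  show ?thesis
  proof (cases "s = s0 \<and> a = a0")
    case True
    then have "(\<Sum>s'\<in>UNIV. (if xs k = (s,a,s') then 1 else 0) * td k b s a s')
             = (\<Sum>s'\<in>UNIV. if s' = s0' then td k b s a s' else 0)"
      by (intro sum.cong) (auto simp: x)
    then show ?thesis using True x by simp
  qed (auto simp: x)
qed

text \<open>\<open>noise\<close> is the part of the update with zero conditional mean.\<close>
lemma Q_Suc_eq:
  "Q (Suc k) b s a
     = Q k b s a + \<alpha> k * d s a * (target k b s a - (1 + \<beta>) * Q k b s a) + \<alpha> k * noise k b s a"
proof -
  have "(\<Sum>s'\<in>UNIV. freq s a s' * td k b s a s')
      = (\<Sum>s'\<in>UNIV. d s a * (pmf (P s a) s' * (r s a s' + \<gamma> * Qmax k (\<not> b) s'))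
          + (d s a * (\<beta> * Q k (\<not> b) s a - (1 + \<beta>) * Q k b s a)) * pmf (P s a) s')"
    by (intro sum.cong) (auto simp: freq_def td_def algebra_simps)
  also have "\<dots> = d s a * (\<Sum>s'\<in>UNIV. pmf (P s a) s' * (r s a s' + \<gamma> * Qmax k (\<not> b) s'))
       + (d s a * (\<beta> * Q k (\<not> b) s a - (1 + \<beta>) * Q k b s a)) * (\<Sum>s'\<in>UNIV. pmf (P s a) s')"
    by (simp add: sum.distrib sum_distrib_left sum_distrib_right)
  also have "\<dots> = d s a * (target k b s a - (1 + \<beta>) * Q k b s a)"
    unfolding sum_pmf_finite_UNIV target_def bellman_def Qmax_def by (simp add: algebra_simps)
  finally have mean: "(\<Sum>s'\<in>UNIV. freq s a s' * td k b s a s')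
      = d s a * (target k b s a - (1 + \<beta>) * Q k b s a)" .
  have "(\<Sum>s'\<in>UNIV. (if xs k = (s,a,s') then 1 else 0) * td k b s a s')
      = (\<Sum>s'\<in>UNIV. freq s a s' * td k b s a s' + \<xi> k s a s' * td k b s a s')"
    by (intro sum.cong) (auto simp: \<xi>_def algebra_simps)
  also have "\<dots> = d s a * (target k b s a - (1 + \<beta>) * Q k b s a) + noise k b s a"
    unfolding noise_def mean[symmetric] by (rule sum.distrib)
  finally have eq: "(\<Sum>s'\<in>UNIV. (if xs k = (s,a,s') then 1 else 0) * td k b s a s')
      = d s a * (target k b s a - (1 + \<beta>) * Q k b s a) + noise k b s a" .
  show ?thesis unfolding Q_Suc sum_sample_indicator_td[symmetric] eq by (simp add: algebra_simps)
qed

text \<open>The noise accumulated with the same damping as the iterate itself.\<close>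
primrec W :: "bool \<Rightarrow> 's \<Rightarrow> 'a \<Rightarrow> 's \<Rightarrow> nat \<Rightarrow> real" where
  "W b s a s' 0 = 0"
| "W b s a s' (Suc k) = (1 - rate s a * \<alpha> k) * W b s a s' k + (\<alpha> k * \<xi> k s a s') * td k b s a s'"

lemma W_tendsto_0: "(\<lambda>k. W b s a s' k) \<longlonglongrightarrow> 0"
proof (rule LIMSEQ_zero_if_summable_noise[where c="rate s a" and \<alpha>=\<alpha> and u="\<lambda>k. \<alpha> k * \<xi> k s a s'"
      and V="\<lambda>k. td k b s a s'" and B=td_bound and L="(\<gamma> + 1 + 2 * \<beta>) * td_bound"])
  show "summable (\<lambda>k. \<alpha> k * \<xi> k s a s')"
    using noise_summable[of s a s'] by (simp add: \<xi>_def freq_def)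
qed (auto simp: rate_pos alpha_nonneg alpha_lim alpha_not_summable abs_td_le abs_td_Suc_diff_le)

definition R :: "nat \<Rightarrow> bool \<Rightarrow> 's \<Rightarrow> 'a \<Rightarrow> real" where
  "R k b s a = (Q k b s a - Qopt s a) - (\<Sum>s'\<in>UNIV. W b s a s' k)"

lemma R_Suc:
  "R (Suc k) b s a
     = (1 - rate s a * \<alpha> k) * R k b s a + \<alpha> k * d s a * (target k b s a - (1 + \<beta>) * Qopt s a)"
proof -
  have "(\<Sum>s'\<in>UNIV. W b s a s' (Suc k))
      = (1 - rate s a * \<alpha> k) * (\<Sum>s'\<in>UNIV. W b s a s' k) + \<alpha> k * noise k b s a"
    by (simp add: sum.distrib sum_distrib_left noise_def mult.assoc)
  then show ?thesis unfolding R_def Q_Suc_eq rate_def by (simp add: algebra_simps)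
qed

lemma abs_target_diff_le:
  assumes "\<And>b s a. \<bar>Q k b s a - Qopt s a\<bar> \<le> E"
  shows "\<bar>target k b s a - (1 + \<beta>) * Qopt s a\<bar> \<le> (\<gamma> + \<beta>) * E"
proof -
  have "target k b s a - (1 + \<beta>) * Qopt s a
      = (bellman P r \<gamma> (Q k (\<not> b)) s a - bellman P r \<gamma> Qopt s a) + \<beta> * (Q k (\<not> b) s a - Qopt s a)"
    using bellman_Qopt by (simp add: target_def algebra_simps)
  also have "\<bar>\<dots>\<bar> \<le> \<gamma> * E + \<beta> * E"
    using abs_triangle_ineq[of "bellman P r \<gamma> (Q k (\<not> b)) s a - bellman P r \<gamma> Qopt s a"
                               "\<beta> * (Q k (\<not> b) s a - Qopt s a)"]
      abs_bellman_diff_le[where Q="Q k (\<not> b)" and Q'=Qopt and P=P and r=r and s=s and a=a,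
        OF gamma(1) assms]
      mult_left_mono[OF assms less_imp_le[OF beta], of "\<not> b" s a]
      abs_mult[of \<beta> "Q k (\<not> b) s a - Qopt s a"] abs_of_pos[OF beta]
    by linarith
  finally show ?thesis by (simp add: algebra_simps)
qed

definition W_norm :: "nat \<Rightarrow> real" where
  "W_norm k = (\<Sum>i\<in>UNIV. \<Sum>s'\<in>UNIV. \<bar>W (fst i) (fst (snd i)) (snd (snd i)) s' k\<bar>)"

lemma W_norm_tendsto_0: "W_norm \<longlonglongrightarrow> 0"
proof -
  have "W_norm \<longlonglongrightarrow> (\<Sum>i\<in>(UNIV::(bool \<times> 's \<times> 'a) set). \<Sum>s'\<in>(UNIV::'s set). \<bar>0::real\<bar>)"
    unfolding W_norm_def[abs_def] by (intro tendsto_sum tendsto_rabs W_tendsto_0)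
  then show ?thesis by simp
qed

lemma abs_sum_W_le: "\<bar>\<Sum>s'\<in>UNIV. W b s a s' k\<bar> \<le> W_norm k"
proof -
  have "\<bar>\<Sum>s'\<in>UNIV. W b s a s' k\<bar> \<le> (\<Sum>s'\<in>UNIV. \<bar>W b s a s' k\<bar>)" by (rule sum_abs)
  also have "\<dots> \<le> W_norm k" unfolding W_norm_def
    using member_le_sum[where i="(b,s,a)" and A=UNIV
        and f="\<lambda>i. \<Sum>s'\<in>UNIV. \<bar>W (fst i) (fst (snd i)) (snd (snd i)) s' k\<bar>"]
    by (auto intro: sum_nonneg)
  finally show ?thesis .
qed

definition \<rho> :: real where "\<rho> = (\<gamma> + \<beta>) / (1 + \<beta>)"

lemma \<rho>_bounds: "0 \<le> \<rho>" "\<rho> < 1"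
  unfolding \<rho>_def using gamma beta by (auto simp: field_simps)

lemma abs_R_Suc_le:
  assumes "\<And>b s a. \<bar>R k b s a\<bar> \<le> D" and "rate s a * \<alpha> k \<le> 1"
  shows "\<bar>R (Suc k) b s a\<bar>
         \<le> (1 - rate s a * \<alpha> k) * \<bar>R k b s a\<bar> + rate s a * \<alpha> k * (\<rho> * (D + W_norm k))"
proof -
  have "\<bar>Q k b' s' a' - Qopt s' a'\<bar> \<le> D + W_norm k" for b' s' a'
    using abs_sum_W_le[of b' s' a' k] assms(1)[of b' s' a'] unfolding R_def by linarith
  then have "\<bar>target k b s a - (1 + \<beta>) * Qopt s a\<bar> \<le> (\<gamma> + \<beta>) * (D + W_norm k)"
    by (rule abs_target_diff_le)
  moreover have "0 \<le> \<alpha> k * d s a" using alpha_nonneg[of k] d_pos[of s a] by simp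
  ultimately have "\<bar>R (Suc k) b s a\<bar>
      \<le> (1 - rate s a * \<alpha> k) * \<bar>R k b s a\<bar> + \<alpha> k * d s a * ((\<gamma> + \<beta>) * (D + W_norm k))"
    using abs_mult_nonneg_add_le[of "1 - rate s a * \<alpha> k" "\<alpha> k * d s a" "R k b s a"
        "target k b s a - (1 + \<beta>) * Qopt s a"] assms(2) mult_left_mono
    unfolding R_Suc by fastforce
  also have "\<alpha> k * d s a * ((\<gamma> + \<beta>) * (D + W_norm k)) = rate s a * \<alpha> k * (\<rho> * (D + W_norm k))"
    unfolding rate_def \<rho>_def using beta by (simp add: field_simps)
  finally show ?thesis .
qed

text \<open>One round of the contraction; the slack \<open>\<delta>\<close> absorbs the vanishing noise \<open>W_norm\<close>.\<close>
lemma eventually_abs_R_le_contract: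
  assumes "eventually (\<lambda>k. \<forall>b s a. \<bar>R k b s a\<bar> \<le> D) sequentially" "0 < \<delta>"
  shows "eventually (\<lambda>k. \<forall>b s a. \<bar>R k b s a\<bar> \<le> \<rho> * D + \<delta>) sequentially"
proof -
  have "eventually (\<lambda>k. \<bar>R k b s a\<bar> \<le> (\<rho> * D + \<delta>/2) + \<delta>/2) sequentially" for b s a
  proof (rule eventually_le_if_averaging[where \<tau>="\<lambda>k. rate s a * \<alpha> k" and v="\<lambda>k. \<rho> * (D + W_norm k)"])
    show "0 \<le> rate s a * \<alpha> k" for k using rate_pos[of s a] alpha_nonneg[of k] by simp
    show "\<not> summable (\<lambda>k. rate s a * \<alpha> k)" using rate_pos[of s a] alpha_not_summable by simp
    have "eventually (\<lambda>k. \<bar>\<rho> * W_norm k\<bar> \<le> \<delta>/2) sequentially"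
      using assms(2) by (intro LIMSEQ_zeroD_abs_le tendsto_mult_right_zero W_norm_tendsto_0) auto
    with assms(1) eventually_mult_le_1[OF alpha_lim rate_pos[of s a]]
    show "eventually (\<lambda>k. rate s a * \<alpha> k \<le> 1
            \<and> \<bar>R (Suc k) b s a\<bar> \<le> (1 - rate s a * \<alpha> k) * \<bar>R k b s a\<bar> + rate s a * \<alpha> k * (\<rho> * (D + W_norm k))
            \<and> \<rho> * (D + W_norm k) \<le> \<rho> * D + \<delta>/2) sequentially"
    proof eventually_elim
      case (elim k)
      then have "\<bar>R (Suc k) b s a\<bar>
          \<le> (1 - rate s a * \<alpha> k) * \<bar>R k b s a\<bar> + rate s a * \<alpha> k * (\<rho> * (D + W_norm k))"
        by (intro abs_R_Suc_le) auto
      with elim show ?case by (auto simp: distrib_left)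
    qed
  qed (use assms(2) in simp)
  then have "eventually (\<lambda>k. \<forall>i::bool \<times> 's \<times> 'a.
               \<bar>R k (fst i) (fst (snd i)) (snd (snd i))\<bar> \<le> \<rho> * D + \<delta>) sequentially"
    by (intro eventually_all_finite) (simp add: add.assoc)
  then show ?thesis by eventually_elim auto
qed

lemma eventually_abs_R_bounded: "\<exists>D. eventually (\<lambda>k. \<forall>b s a. \<bar>R k b s a\<bar> \<le> D) sequentially"
proof -
  define D where "D = Qbound + qnorm Qopt + 1"
  have "eventually (\<lambda>k. \<bar>W_norm k\<bar> \<le> 1) sequentially"
    by (intro LIMSEQ_zeroD_abs_le W_norm_tendsto_0) simp
  then have "eventually (\<lambda>k. \<forall>b s a. \<bar>R k b s a\<bar> \<le> D) sequentially"
  proof eventually_elim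
    case (elim k)
    show ?case
    proof (intro allI)
      fix b s a
      show "\<bar>R k b s a\<bar> \<le> D"
        using Qbound(2)[of k b s a] abs_le_qnorm[of Qopt s a] abs_sum_W_le[of b s a k] elim
        unfolding R_def D_def by linarith
    qed
  qed
  then show ?thesis by blast
qed

lemma eventually_abs_R_le_power:
  assumes "eventually (\<lambda>k. \<forall>b s a. \<bar>R k b s a\<bar> \<le> D) sequentially" "0 < \<epsilon>"
  shows "eventually (\<lambda>k. \<forall>b s a. \<bar>R k b s a\<bar> \<le> \<rho> ^ n * D + \<epsilon>) sequentially"
proof (induction n)
  case 0
  from assms(1) show ?case
  proof eventually_elim
    case (elim k)
    show ?case
    proof (intro allI)
      fix b s a
      show "\<bar>R k b s a\<bar> \<le> \<rho> ^ 0 * D + \<epsilon>" using elim[rule_format, of b s a] assms(2) by simp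
    qed
  qed
next
  case (Suc n)
  have "0 < (1 - \<rho>) * \<epsilon>" using \<rho>_bounds assms(2) by simp
  from eventually_abs_R_le_contract[OF Suc.IH this]
  show ?case by (simp add: algebra_simps)
qed

lemma R_tendsto_0: "(\<lambda>k. R k b s a) \<longlonglongrightarrow> 0"
proof (rule LIMSEQ_zeroI_abs_le)
  fix \<epsilon> :: real assume "0 < \<epsilon>"
  obtain D where D: "eventually (\<lambda>k. \<forall>b s a. \<bar>R k b s a\<bar> \<le> D) sequentially"
    using eventually_abs_R_bounded by blast
  have "(\<lambda>n. \<rho> ^ n * D) \<longlonglongrightarrow> 0"
    using \<rho>_bounds by (intro tendsto_mult_left_zero LIMSEQ_power_zero) auto
  then obtain n where n: "\<bar>\<rho> ^ n * D\<bar> \<le> \<epsilon>/2"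
    using LIMSEQ_zeroD_abs_le[of _ "\<epsilon>/2"] \<open>0 < \<epsilon>\<close> eventually_sequentially by force
  have "eventually (\<lambda>k. \<forall>b s a. \<bar>R k b s a\<bar> \<le> \<rho> ^ n * D + \<epsilon>/2) sequentially"
    using \<open>0 < \<epsilon>\<close> by (intro eventually_abs_R_le_power[OF D]) simp
  then show "eventually (\<lambda>k. \<bar>R k b s a\<bar> \<le> \<epsilon>) sequentially"
  proof eventually_elim
    case (elim k)
    then have "\<bar>R k b s a\<bar> \<le> \<rho> ^ n * D + \<epsilon>/2" by blast
    with n show ?case by linarith
  qed
qed

theorem Q_tendsto_Qopt: "(\<lambda>k. Q k b s a) \<longlonglongrightarrow> Qopt s a"
proof -
  have "(\<lambda>k. Qopt s a + R k b s a + (\<Sum>s'\<in>UNIV. W b s a s' k))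
          \<longlonglongrightarrow> Qopt s a + 0 + (\<Sum>s'\<in>(UNIV::'s set). 0)"
    by (intro tendsto_add tendsto_const R_tendsto_0 tendsto_sum W_tendsto_0)
  then show ?thesis unfolding R_def by simp
qed

end

section \<open>The sampling noise\<close>

lemma pmf_bind_finite: "pmf (bind_pmf (N :: 'b::finite pmf) f) i = (\<Sum>x\<in>UNIV. pmf N x * pmf (f x) i)"
  by (simp add: pmf_bind integral_measure_pmf[where A=UNIV])

lemma pmf_sample_pmf:
  "pmf (sample_pmf p b P) (s, a, s') = pmf p (s::'s::finite) * pmf (b s) (a::'a::finite) * pmf (P s a) s'"
proof -
  have last: "pmf (P x y \<bind> (\<lambda>z. return_pmf (x, y, z))) (s, a, s')
            = (if x = s \<and> y = a then pmf (P s a) s' else 0)" for x y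
    by (simp add: pmf_bind_finite pmf_return indicator_def if_distrib cong: if_cong)
  have middle: "pmf (b x \<bind> (\<lambda>y. P x y \<bind> (\<lambda>z. return_pmf (x, y, z)))) (s, a, s')
      = (if x = s then pmf (b s) a * pmf (P s a) s' else 0)" for x
    by (subst pmf_bind_finite) (simp add: last if_distrib cong: if_cong)
  show ?thesis unfolding sample_pmf_def
    by (subst pmf_bind_finite) (simp add: middle if_distrib cong: if_cong)
qed

lemma (in prob_space) integral_centered_indicator:
  fixes X :: "'a \<Rightarrow> 'x::finite"
  assumes "X \<in> measurable M (count_space UNIV)" "distr M (count_space UNIV) X = measure_pmf \<pi>"
  shows "(\<integral>\<omega>. c * ((if X \<omega> = j then 1 else 0) - pmf \<pi> j) \<partial>M) = 0"
proof -
  have "(\<integral>\<omega>. c * ((if X \<omega> = j then 1 else 0) - pmf \<pi> j) \<partial>M)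
      = (\<integral>x. c * ((if x = j then 1 else 0) - pmf \<pi> j) \<partial>distr M (count_space UNIV) X)"
    by (rule integral_distr[symmetric]) (auto intro: assms(1))
  also have "\<dots> = (\<integral>x. c * ((if x = j then 1 else 0) - pmf \<pi> j) \<partial>measure_pmf \<pi>)"
    by (simp add: assms(2))
  also have "\<dots> = (\<Sum>x\<in>UNIV. pmf \<pi> x *\<^sub>R (c * ((if x = j then 1 else 0) - pmf \<pi> j)))"
    by (rule integral_measure_pmf[where A=UNIV]) auto
  also have "\<dots> = (\<Sum>x\<in>UNIV. (if x = j then c * pmf \<pi> j else 0) - c * pmf \<pi> j * pmf \<pi> x)"
    by (intro sum.cong) (auto simp: algebra_simps)
  also have "\<dots> = c * pmf \<pi> j - c * pmf \<pi> j * (\<Sum>x\<in>UNIV. pmf \<pi> x)"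
    by (simp add: sum_subtractf sum_distrib_left)
  finally show ?thesis by (simp add: sum_pmf_finite_UNIV)
qed

lemma (in prob_space) AE_summable_weighted_centered_indicator:
  fixes X :: "nat \<Rightarrow> 'a \<Rightarrow> 'x::finite"
  assumes meas: "\<And>k. X k \<in> measurable M (count_space UNIV)"
    and indep: "indep_vars (\<lambda>_. count_space UNIV) X UNIV"
    and distr: "\<And>k. distr M (count_space UNIV) (X k) = measure_pmf \<pi>"
    and \<alpha>: "\<And>k. 0 \<le> \<alpha> k" "summable (\<lambda>k. (\<alpha> k)\<^sup>2)"
  shows "AE \<omega> in M. \<forall>j. summable (\<lambda>k. \<alpha> k * ((if X k \<omega> = j then 1 else 0) - pmf \<pi> j))"
  unfolding AE_all_countable
proof
  fix j
  define \<phi> where "\<phi> k x = \<alpha> k * ((if x = j then 1 else 0) - pmf \<pi> j)" for k x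
  have "\<bar>\<phi> k x\<bar> \<le> \<alpha> k" for k x
  proof -
    have "\<bar>(if x = j then 1 else 0) - pmf \<pi> j\<bar> \<le> 1" using pmf_le_1[of \<pi> j] by auto
    from mult_left_mono[OF this \<alpha>(1)[of k]] show ?thesis
      unfolding \<phi>_def using \<alpha>(1)[of k] by (simp add: abs_mult)
  qed
  moreover have "(\<integral>\<omega>. \<phi> k (X k \<omega>) \<partial>M) = 0" for k
    unfolding \<phi>_def by (rule integral_centered_indicator[OF meas distr])
  ultimately interpret indep_bounded_centered_sq_summable M X \<phi> \<alpha>
    using meas indep \<alpha>(2) by unfold_locales auto
  from AE_summable_Y
  show "AE \<omega> in M. summable (\<lambda>k. \<alpha> k * ((if X k \<omega> = j then 1 else 0) - pmf \<pi> j))"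
    by (simp add: Y_def \<phi>_def)
qed

theorem theorem4:
  fixes P :: "'s::finite \<Rightarrow> 'a::finite \<Rightarrow> 's pmf"
    and r :: "'s \<Rightarrow> 'a \<Rightarrow> 's \<Rightarrow> real"
    and \<gamma> \<beta> :: real
    and p :: "'s pmf" and b :: "'s \<Rightarrow> 'a pmf"
    and M :: "'m measure"
    and X :: "nat \<Rightarrow> 'm \<Rightarrow> 's \<times> 'a \<times> 's"
    and \<alpha> :: "nat \<Rightarrow> real"
    and QA0 QB0 :: "'s \<Rightarrow> 'a \<Rightarrow> real"
  assumes gamma: "0 \<le> \<gamma>" "\<gamma> < 1"
    and beta: "\<beta> > 0"
    and M: "prob_space M"
    and meas: "\<And>k. X k \<in> measurable M (count_space UNIV)"
    and indep: "prob_space.indep_vars M (\<lambda>_. count_space UNIV) X UNIV"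
    and distr: "\<And>k. distr M (count_space UNIV) (X k) = measure_pmf (sample_pmf p b P)"
    and d_pos: "\<And>s a. pmf p s * pmf (b s) a > 0"
    and step: "\<And>k. 0 \<le> \<alpha> k \<and> \<alpha> k \<le> 1"
    and not_summable: "\<not> summable \<alpha>"
    and sq_summable: "summable (\<lambda>k. (\<alpha> k)\<^sup>2)"
  shows "AE \<omega> in M. \<forall>s a.
           (\<lambda>k. fst (sgt2 r \<gamma> \<beta> \<alpha> (\<lambda>j. X j \<omega>) QA0 QB0 k) s a) \<longlonglongrightarrow> Qstar P r \<gamma> s a
         \<and> (\<lambda>k. snd (sgt2 r \<gamma> \<beta> \<alpha> (\<lambda>j. X j \<omega>) QA0 QB0 k) s a) \<longlonglongrightarrow> Qstar P r \<gamma> s a"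
proof -
  interpret prob_space M by (rule M)
  \<comment> \<open>of \<open>step\<close> only \<open>0 \<le> \<alpha> k\<close> is needed; \<open>\<alpha> k \<longlonglongrightarrow> 0\<close> follows from \<open>sq_summable\<close>\<close>
  have \<alpha>: "\<And>k. 0 \<le> \<alpha> k" using step by simp
  have "AE \<omega> in M. \<forall>j. summable (\<lambda>k. \<alpha> k * ((if X k \<omega> = j then 1 else 0) - pmf (sample_pmf p b P) j))"
    by (rule AE_summable_weighted_centered_indicator[OF meas indep distr \<alpha> sq_summable])
  then show ?thesis
  proof eventually_elim
    case (elim \<omega>)
    interpret path: sgt2_path r \<gamma> \<beta> \<alpha> "\<lambda>j. X j \<omega>" QA0 QB0 P "\<lambda>s a. pmf p s * pmf (b s) a" "Qstar P r \<gamma>"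
      using gamma beta \<alpha> LIMSEQ_zero_if_summable_power2[OF sq_summable] not_summable d_pos
        bellman_Qstar[OF gamma] elim
      by unfold_locales (simp_all add: pmf_sample_pmf)
    show ?case
      using path.Q_tendsto_Qopt[of True] path.Q_tendsto_Qopt[of False] by (simp add: path.Q_def)
  qed
qed

end
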